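(* For every sufficiently large integer $n$, there is a complete Riemannian metric of positive Ricci curvature on $\mathbb{R}^n$ such that for every point $p\in\mathbb{R}^n$, $$\limsup_{r\to\infty}\frac{\operatorname{diam}(\partial B(p,r))}{r}\geq 1.$$
   Context: $\partial B(p,r)$ is the set of points at distance exactly $r$ from $p$, and its diameter is measured with the Riemannian distance of the metric on $\mathbb{R}^n$. *)

theory Defs
  imports "HOL-Analysis.Analysis"
begin

text \<open>R^n is modelled as the set of sequences x :: nat => real vanishing from index n on.
  Coordinates are the indices 0..n-1. Topology on this set: subspace of the product topology,
  which coincides with the Euclidean topology.\<close>

definition Rn :: "nat \<Rightarrow> (nat \<Rightarrow> real) set" where
  "Rn n = {x. \<forall>i\<ge>n. x i = 0}"

definition shift :: "(nat \<Rightarrow> real) \<Rightarrow> nat \<Rightarrow> real \<Rightarrow> (nat \<Rightarrow> real)" where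
  "shift x i t = (\<lambda>j. x j + (if j = i then t else 0))"

definition pd :: "nat \<Rightarrow> ((nat \<Rightarrow> real) \<Rightarrow> real) \<Rightarrow> (nat \<Rightarrow> real) \<Rightarrow> real" where
  "pd i f x = deriv (\<lambda>t. f (shift x i t)) 0"

fun pds :: "nat list \<Rightarrow> ((nat \<Rightarrow> real) \<Rightarrow> real) \<Rightarrow> (nat \<Rightarrow> real) \<Rightarrow> real" where
  "pds [] f = f"
| "pds (i # is) f = pd i (pds is f)"

definition smooth_on_Rn :: "nat \<Rightarrow> ((nat \<Rightarrow> real) \<Rightarrow> real) \<Rightarrow> bool" where
  "smooth_on_Rn n f \<longleftrightarrow>
     (\<forall>ks. set ks \<subseteq> {..<n} \<longrightarrow>
        continuous_on (Rn n) (pds ks f) \<and>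
        (\<forall>i<n. \<forall>x\<in>Rn n. (\<lambda>t. pds ks f (shift x i t)) differentiable (at 0)))"

definition riem_metric :: "nat \<Rightarrow> ((nat \<Rightarrow> real) \<Rightarrow> nat \<Rightarrow> nat \<Rightarrow> real) \<Rightarrow> bool" where
  "riem_metric n g \<longleftrightarrow>
     (\<forall>i<n. \<forall>j<n. smooth_on_Rn n (\<lambda>x. g x i j)) \<and>
     (\<forall>x\<in>Rn n. \<forall>i<n. \<forall>j<n. g x i j = g x j i) \<and>
     (\<forall>x\<in>Rn n. \<forall>v\<in>Rn n. (\<exists>i<n. v i \<noteq> 0) \<longrightarrow> (\<Sum>i<n. \<Sum>j<n. g x i j * v i * v j) > 0)"

definition ginv :: "nat \<Rightarrow> ((nat \<Rightarrow> real) \<Rightarrow> nat \<Rightarrow> nat \<Rightarrow> real) \<Rightarrow> (nat \<Rightarrow> real) \<Rightarrow> nat \<Rightarrow> nat \<Rightarrow> real" where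
  "ginv n g x = (SOME h. \<forall>i<n. \<forall>k<n. (\<Sum>j<n. g x i j * h j k) = (if i = k then 1 else 0))"

definition christoffel :: "nat \<Rightarrow> ((nat \<Rightarrow> real) \<Rightarrow> nat \<Rightarrow> nat \<Rightarrow> real) \<Rightarrow> nat \<Rightarrow> nat \<Rightarrow> nat \<Rightarrow> (nat \<Rightarrow> real) \<Rightarrow> real" where
  "christoffel n g k i j x = (1/2) * (\<Sum>l<n. ginv n g x k l *
      (pd i (\<lambda>y. g y j l) x + pd j (\<lambda>y. g y i l) x - pd l (\<lambda>y. g y i j) x))"

definition ricci :: "nat \<Rightarrow> ((nat \<Rightarrow> real) \<Rightarrow> nat \<Rightarrow> nat \<Rightarrow> real) \<Rightarrow> (nat \<Rightarrow> real) \<Rightarrow> nat \<Rightarrow> nat \<Rightarrow> real" where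
  "ricci n g x i j = (\<Sum>k<n. pd k (christoffel n g k i j) x - pd j (christoffel n g k i k) x
      + (\<Sum>p<n. christoffel n g k k p x * christoffel n g p i j x
               - christoffel n g k j p x * christoffel n g p i k x))"

definition pos_ricci :: "nat \<Rightarrow> ((nat \<Rightarrow> real) \<Rightarrow> nat \<Rightarrow> nat \<Rightarrow> real) \<Rightarrow> bool" where
  "pos_ricci n g \<longleftrightarrow>
     (\<forall>x\<in>Rn n. \<forall>v\<in>Rn n. (\<exists>i<n. v i \<noteq> 0) \<longrightarrow> (\<Sum>i<n. \<Sum>j<n. ricci n g x i j * v i * v j) > 0)"

definition adm_curve :: "nat \<Rightarrow> (real \<Rightarrow> nat \<Rightarrow> real) \<Rightarrow> bool" where
  "adm_curve n c \<longleftrightarrow> (\<forall>t\<in>{0..1}. c t \<in> Rn n) \<and>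
     (\<forall>i<n. (\<lambda>t. c t i) C1_differentiable_on {0..1})"

definition curve_length :: "nat \<Rightarrow> ((nat \<Rightarrow> real) \<Rightarrow> nat \<Rightarrow> nat \<Rightarrow> real) \<Rightarrow> (real \<Rightarrow> nat \<Rightarrow> real) \<Rightarrow> real" where
  "curve_length n g c = integral {0..1} (\<lambda>t. sqrt (\<Sum>i<n. \<Sum>j<n. g (c t) i j
      * vector_derivative (\<lambda>s. c s i) (at t within {0..1})
      * vector_derivative (\<lambda>s. c s j) (at t within {0..1})))"

definition rdist :: "nat \<Rightarrow> ((nat \<Rightarrow> real) \<Rightarrow> nat \<Rightarrow> nat \<Rightarrow> real) \<Rightarrow> (nat \<Rightarrow> real) \<Rightarrow> (nat \<Rightarrow> real) \<Rightarrow> real" where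
  "rdist n g p q = Inf {curve_length n g c | c. adm_curve n c \<and> c 0 = p \<and> c 1 = q}"

definition complete_metric :: "nat \<Rightarrow> ((nat \<Rightarrow> real) \<Rightarrow> nat \<Rightarrow> nat \<Rightarrow> real) \<Rightarrow> bool" where
  "complete_metric n g \<longleftrightarrow>
     (\<forall>s. (\<forall>m. s m \<in> Rn n) \<and> (\<forall>e>0. \<exists>N. \<forall>m\<ge>N. \<forall>k\<ge>N. rdist n g (s m) (s k) < e)
        \<longrightarrow> (\<exists>x\<in>Rn n. (\<lambda>m. rdist n g (s m) x) \<longlonglongrightarrow> 0))"

definition geo_sphere :: "nat \<Rightarrow> ((nat \<Rightarrow> real) \<Rightarrow> nat \<Rightarrow> nat \<Rightarrow> real) \<Rightarrow> (nat \<Rightarrow> real) \<Rightarrow> real \<Rightarrow> (nat \<Rightarrow> real) set" where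
  "geo_sphere n g p r = {x \<in> Rn n. rdist n g p x = r}"

definition rdiam :: "nat \<Rightarrow> ((nat \<Rightarrow> real) \<Rightarrow> nat \<Rightarrow> nat \<Rightarrow> real) \<Rightarrow> (nat \<Rightarrow> real) set \<Rightarrow> real" where
  "rdiam n g S = Sup {rdist n g x y | x y. x \<in> S \<and> y \<in> S}"

end

theory Submission
  imports Defs
begin

text \<open>The metric is the conformal metric \<open>g = \<langle>x\<rangle>\<^sup>-\<^sup>1 |dx|\<^sup>2\<close>, where
  \<open>\<langle>x\<rangle> = sqrt (1 + |x|\<^sup>2)\<close>. Its Christoffel symbols are explicit rational functions of \<open>x\<close>,
  and a direct computation gives \<open>Ric(v,v) = \<alpha> |v|\<^sup>2 + \<beta> (x\<cdot>v)\<^sup>2\<close> with \<open>\<beta> \<le> 0\<close> and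
  \<open>\<alpha> + \<beta> |x|\<^sup>2 = (n - 1) / \<langle>x\<rangle>\<^sup>4\<close>; by Cauchy-Schwarz the Ricci curvature is positive for
  \<open>n \<ge> 2\<close>.

  Distances are bounded above by Euclidean distances, as the conformal factor is at most 1,
  and below by the functions \<open>b\<^sub>e(x) = sqrt (2 (\<langle>x\<rangle> + x\<cdot>e))\<close>, \<open>|e| = 1\<close> (\<open>lipfun\<close>),
  which are 1-Lipschitz for \<open>g\<close>. Since \<open>x\<^sub>i = (b\<^sub>e\<^sub>i(x)\<^sup>2 - b\<^sub>-\<^sub>e\<^sub>i(x)\<^sup>2) / 4\<close>, a Cauchy sequence for
  \<open>g\<close> converges in Euclidean terms, hence for \<open>g\<close>: the metric is complete.

  For the spheres about \<open>p\<close>, take a unit vector \<open>e \<perp> p\<close>. The reflection in \<open>e\<^sup>\<perp>\<close> is an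
  isometry fixing \<open>p\<close>, so \<open>s\<^sup>2 e\<close> and \<open>-s\<^sup>2 e\<close> lie on a common sphere about \<open>p\<close>. Its radius
  \<open>r\<close> is at most \<open>|p| + 2 s\<close> (follow a parabola-like curve) and at least \<open>2 s - b\<^sub>e(p)\<close>, while
  \<open>b\<^sub>e\<close> differs by at least \<open>2 s - 2\<close> at the two points. So arbitrarily large spheres have
  diameter at least \<open>r - |p| - 2\<close>.\<close>

section \<open>Functions built from coordinates are smooth\<close>

lemma shift_in_Rn: "x \<in> Rn n \<Longrightarrow> i < n \<Longrightarrow> shift x i t \<in> Rn n"
  by (auto simp: Rn_def shift_def)

lemma shift_zero [simp]: "shift x i 0 = x"
  by (auto simp: shift_def)

lemma shift_apply: "shift x i t j = x j + (if j = i then t else 0)"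
  by (simp add: shift_def)

inductive elementary :: "nat \<Rightarrow> ((nat \<Rightarrow> real) \<Rightarrow> real) \<Rightarrow> bool" for n where
  el_const: "elementary n (\<lambda>x. c)"
| el_coord: "i < n \<Longrightarrow> elementary n (\<lambda>x. x i)"
| el_add: "elementary n f \<Longrightarrow> elementary n g \<Longrightarrow> elementary n (\<lambda>x. f x + g x)"
| el_mult: "elementary n f \<Longrightarrow> elementary n g \<Longrightarrow> elementary n (\<lambda>x. f x * g x)"
| el_inverse: "elementary n f \<Longrightarrow> \<forall>x\<in>Rn n. f x \<noteq> 0 \<Longrightarrow> elementary n (\<lambda>x. inverse (f x))"
| el_sqrt: "elementary n f \<Longrightarrow> \<forall>x\<in>Rn n. f x > 0 \<Longrightarrow> elementary n (\<lambda>x. sqrt (f x))"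
| el_cong: "elementary n f \<Longrightarrow> \<forall>x\<in>Rn n. f x = g x \<Longrightarrow> elementary n g"

lemma elementary_continuous_on: "elementary n f \<Longrightarrow> continuous_on (Rn n) f"
proof (induction rule: elementary.induct)
  case (el_coord i)
  show ?case
    by (rule continuous_on_subset[OF continuous_on_product_coordinates]) simp
next
  case (el_cong f g)
  then show ?case using continuous_on_cong by blast
qed (auto intro!: continuous_intros)

lemma elementary_sum:
  "finite I \<Longrightarrow> (\<And>i. i \<in> I \<Longrightarrow> elementary n (f i)) \<Longrightarrow> elementary n (\<lambda>x. \<Sum>i\<in>I. f i x)"
  by (induction I rule: finite_induct) (auto intro: el_add el_const)

lemma elementary_has_partial_derivative:
  assumes "elementary n f" "i < n"
  shows "\<exists>D. elementary n D \<and> (\<forall>x\<in>Rn n. ((\<lambda>t. f (shift x i t)) has_real_derivative D x) (at 0))"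
  using assms(1)
proof (induction rule: elementary.induct)
  case (el_const c)
  show ?case by (rule exI[of _ "\<lambda>x. 0"]) (auto intro: elementary.el_const)
next
  case (el_coord j)
  show ?case
  proof (rule exI[of _ "\<lambda>x. if j = i then 1 else 0"], intro conjI ballI)
    show "elementary n (\<lambda>x. if j = i then 1 else 0)" by (rule elementary.el_const)
    show "((\<lambda>t. shift x i t j) has_real_derivative (if j = i then 1 else 0)) (at 0)" for x
      by (cases "j = i") (auto intro!: derivative_eq_intros simp: shift_apply)
  qed
next
  case (el_add f g)
  then obtain Df Dg where "elementary n Df" "elementary n Dg"
    and "\<forall>x\<in>Rn n. ((\<lambda>t. f (shift x i t)) has_real_derivative Df x) (at 0)"
    and "\<forall>x\<in>Rn n. ((\<lambda>t. g (shift x i t)) has_real_derivative Dg x) (at 0)" by blast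
  then show ?case
    by (intro exI[of _ "\<lambda>x. Df x + Dg x"]) (auto intro: elementary.el_add DERIV_add)
next
  case (el_mult f g)
  then obtain Df Dg where D: "elementary n Df" "elementary n Dg"
    and dF: "\<forall>x\<in>Rn n. ((\<lambda>t. f (shift x i t)) has_real_derivative Df x) (at 0)"
    and dG: "\<forall>x\<in>Rn n. ((\<lambda>t. g (shift x i t)) has_real_derivative Dg x) (at 0)" by blast
  have "elementary n (\<lambda>x. f x * Dg x + Df x * g x)"
    by (intro elementary.el_add elementary.el_mult el_mult.hyps D)
  moreover have "((\<lambda>t. f (shift x i t) * g (shift x i t)) has_real_derivative
      f x * Dg x + Df x * g x) (at 0)" if "x \<in> Rn n" for x
    using DERIV_mult[OF dF[rule_format, OF that] dG[rule_format, OF that]]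
    by (simp add: algebra_simps)
  ultimately show ?case by blast
next
  case (el_inverse f)
  then obtain Df where D: "elementary n Df"
    and dF: "\<forall>x\<in>Rn n. ((\<lambda>t. f (shift x i t)) has_real_derivative Df x) (at 0)" by blast
  have inv: "elementary n (\<lambda>x. inverse (f x))" by (rule elementary.el_inverse[OF el_inverse.hyps])
  have "elementary n (\<lambda>x. (-1) * (inverse (f x) * Df x * inverse (f x)))"
    by (intro elementary.el_mult el_const inv D)
  then have "elementary n (\<lambda>x. - (inverse (f x) * Df x * inverse (f x)))"
    by (rule el_cong) simp
  moreover have "((\<lambda>t. inverse (f (shift x i t))) has_real_derivative
      - (inverse (f x) * Df x * inverse (f x))) (at 0)" if "x \<in> Rn n" for x
    using DERIV_inverse'[OF dF[rule_format, OF that]] el_inverse.hyps that by simp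
  ultimately show ?case by blast
next
  case (el_sqrt f)
  then obtain Df where D: "elementary n Df"
    and dF: "\<forall>x\<in>Rn n. ((\<lambda>t. f (shift x i t)) has_real_derivative Df x) (at 0)" by blast
  have "elementary n (\<lambda>x. inverse (sqrt (f x)))"
    using el_sqrt.hyps by (intro elementary.el_inverse elementary.el_sqrt) auto
  then have "elementary n (\<lambda>x. Df x * (inverse (sqrt (f x)) * (1/2)))"
    by (intro elementary.el_mult el_const D)
  then have "elementary n (\<lambda>x. Df x * (inverse (sqrt (f x)) / 2))"
    by (rule el_cong) simp
  moreover have "((\<lambda>t. sqrt (f (shift x i t))) has_real_derivative
      Df x * (inverse (sqrt (f x)) / 2)) (at 0)" if "x \<in> Rn n" for x
  proof -
    have "(sqrt has_real_derivative inverse (sqrt (f x)) / 2) (at (f (shift x i 0)))"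
      using DERIV_real_sqrt el_sqrt.hyps that by simp
    from DERIV_chain2[OF this dF[rule_format, OF that]] show ?thesis
      by (simp add: mult.commute)
  qed
  ultimately show ?case by blast
next
  case (el_cong f g)
  then obtain D where "elementary n D"
    and dF: "\<forall>x\<in>Rn n. ((\<lambda>t. f (shift x i t)) has_real_derivative D x) (at 0)" by blast
  moreover have "(\<lambda>t. f (shift x i t)) = (\<lambda>t. g (shift x i t))" if "x \<in> Rn n" for x
    using el_cong.hyps shift_in_Rn[OF that \<open>i < n\<close>] by auto
  ultimately show ?case by metis
qed

lemma pd_eqI:
  assumes "((\<lambda>t. f (shift x i t)) has_real_derivative D) (at 0)"
  shows "pd i f x = D"
  using assms unfolding pd_def by (rule DERIV_imp_deriv)

lemma pd_cong_Rn:
  assumes "\<forall>y\<in>Rn n. f y = g y" "x \<in> Rn n" "i < n"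
  shows "pd i f x = pd i g x"
proof -
  have "(\<lambda>t. f (shift x i t)) = (\<lambda>t. g (shift x i t))"
    using assms shift_in_Rn by auto
  then show ?thesis by (simp add: pd_def)
qed

lemma pd_const: "pd i (\<lambda>y. c) x = 0"
  by (rule pd_eqI) simp

lemma elementary_pd:
  assumes "elementary n f" "i < n"
  shows "elementary n (pd i f)"
proof -
  obtain D where "elementary n D"
    and "\<forall>x\<in>Rn n. ((\<lambda>t. f (shift x i t)) has_real_derivative D x) (at 0)"
    using elementary_has_partial_derivative[OF assms] by blast
  then show ?thesis by (metis el_cong pd_eqI)
qed

lemma elementary_pds: "elementary n f \<Longrightarrow> set ks \<subseteq> {..<n} \<Longrightarrow> elementary n (pds ks f)"
  by (induction ks) (auto intro: elementary_pd)

lemma elementary_smooth_on_Rn: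
  assumes "elementary n f"
  shows "smooth_on_Rn n f"
  unfolding smooth_on_Rn_def
proof (intro allI impI conjI ballI)
  fix ks :: "nat list" assume "set ks \<subseteq> {..<n}"
  then have ks: "elementary n (pds ks f)" using elementary_pds assms by blast
  then show "continuous_on (Rn n) (pds ks f)" by (rule elementary_continuous_on)
  show "(\<lambda>t. pds ks f (shift x i t)) differentiable at 0" if "i < n" "x \<in> Rn n" for i x
    using elementary_has_partial_derivative[OF ks that(1)] that(2) real_differentiable_def by blast
qed

section \<open>The conformal metric\<close>

definition sqnorm :: "nat \<Rightarrow> (nat \<Rightarrow> real) \<Rightarrow> real" where
  "sqnorm n x = (\<Sum>i<n. (x i)\<^sup>2)"

definition dotp :: "nat \<Rightarrow> (nat \<Rightarrow> real) \<Rightarrow> (nat \<Rightarrow> real) \<Rightarrow> real" where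
  "dotp n x y = (\<Sum>i<n. x i * y i)"

abbreviation bracket :: "nat \<Rightarrow> (nat \<Rightarrow> real) \<Rightarrow> real" where
  "bracket n x \<equiv> sqrt (1 + sqnorm n x)"

definition conf_factor :: "nat \<Rightarrow> (nat \<Rightarrow> real) \<Rightarrow> real" where
  "conf_factor n x = inverse (bracket n x)"

definition conf_metric :: "nat \<Rightarrow> (nat \<Rightarrow> real) \<Rightarrow> nat \<Rightarrow> nat \<Rightarrow> real" where
  "conf_metric n x i j = (if i = j then conf_factor n x else 0)"

lemma sqnorm_nonneg [simp]: "0 \<le> sqnorm n x"
  by (simp add: sqnorm_def sum_nonneg)

lemma one_plus_sqnorm_pos [simp]: "0 < 1 + sqnorm n x"
  using sqnorm_nonneg[of n x] by linarith

lemma one_plus_sqnorm_neq_0 [simp]: "1 + sqnorm n x \<noteq> 0"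
  using one_plus_sqnorm_pos[of n x] by linarith

lemma bracket_pos: "0 < bracket n x"
  by simp

lemma bracket_sq: "(bracket n x)\<^sup>2 = 1 + sqnorm n x"
  by simp

lemma sqnorm_pos: "\<exists>i<n. v i \<noteq> 0 \<Longrightarrow> 0 < sqnorm n v"
  unfolding sqnorm_def by (metis sum_pos2 finite_lessThan lessThan_iff zero_le_power2 zero_less_power2)

lemma dotp_self: "dotp n x x = sqnorm n x"
  by (simp add: dotp_def sqnorm_def power2_eq_square)

lemma dotp_commute: "dotp n x y = dotp n y x"
  by (simp add: dotp_def mult.commute)

lemma dotp_sq_le: "(dotp n x y)\<^sup>2 \<le> sqnorm n x * sqnorm n y"
  unfolding dotp_def sqnorm_def by (rule Cauchy_Schwarz_ineq_sum)

lemma dotp_lin: "dotp n (\<lambda>i. a * x i + b * y i) z = a * dotp n x z + b * dotp n y z"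
  by (simp add: dotp_def sum.distrib sum_distrib_left algebra_simps)

lemma dotp_scale: "dotp n (\<lambda>i. a * x i) y = a * dotp n x y"
  by (simp add: dotp_def sum_distrib_left mult.assoc)

lemma sqnorm_lin:
  "sqnorm n (\<lambda>i. a * x i + b * y i) = a\<^sup>2 * sqnorm n x + 2 * a * b * dotp n x y + b\<^sup>2 * sqnorm n y"
proof -
  have "sqnorm n (\<lambda>i. a * x i + b * y i)
      = (\<Sum>i<n. a\<^sup>2 * (x i)\<^sup>2 + 2 * a * b * (x i * y i) + b\<^sup>2 * (y i)\<^sup>2)"
    unfolding sqnorm_def by (intro sum.cong refl) (simp add: power2_eq_square algebra_simps)
  then show ?thesis
    by (simp add: sum.distrib sum_distrib_left sqnorm_def dotp_def)
qed

lemma sqnorm_scale: "sqnorm n (\<lambda>i. a * x i) = a\<^sup>2 * sqnorm n x"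
  by (simp add: sqnorm_def sum_distrib_left power_mult_distrib)

lemma sqnorm_shift: "i < n \<Longrightarrow> sqnorm n (shift x i t) = sqnorm n x + 2 * t * x i + t\<^sup>2"
proof -
  assume i: "i < n"
  have "(shift x i t j)\<^sup>2 = (x j)\<^sup>2 + (if j = i then 2 * t * x i + t\<^sup>2 else 0)" for j
    by (auto simp: shift_def power2_eq_square algebra_simps)
  then have "sqnorm n (shift x i t)
      = (\<Sum>j<n. (x j)\<^sup>2) + (\<Sum>j<n. if j = i then 2 * t * x i + t\<^sup>2 else 0)"
    by (simp add: sqnorm_def sum.distrib)
  then show ?thesis using i by (simp add: sqnorm_def)
qed

lemma elementary_sqnorm: "elementary n (sqnorm n)"
proof -
  have "elementary n (\<lambda>x. \<Sum>i<n. x i * x i)"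
    by (intro elementary_sum el_mult el_coord) auto
  then show ?thesis
    by (rule el_cong) (auto simp: sqnorm_def power2_eq_square)
qed

lemma elementary_conf_factor: "elementary n (conf_factor n)"
proof -
  have "elementary n (\<lambda>x. inverse (sqrt (1 + sqnorm n x)))"
    by (intro el_inverse el_sqrt el_add el_const elementary_sqnorm) auto
  then show ?thesis by (rule el_cong) (auto simp: conf_factor_def)
qed

lemma conf_factor_pos: "0 < conf_factor n x"
  by (simp add: conf_factor_def)

lemma conf_factor_le_1: "conf_factor n x \<le> 1"
  by (simp add: conf_factor_def inverse_le_1_iff)

lemma conf_metric_form:
  "(\<Sum>i<n. \<Sum>j<n. conf_metric n x i j * v i * w j) = conf_factor n x * dotp n v w"
proof -
  have "(\<Sum>j<n. conf_metric n x i j * v i * w j) = conf_factor n x * (v i * w i)" if "i < n" for i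
  proof -
    have "(\<Sum>j<n. conf_metric n x i j * v i * w j)
        = (\<Sum>j<n. if i = j then conf_factor n x * v i * w j else 0)"
      by (intro sum.cong) (auto simp: conf_metric_def)
    then show ?thesis using that by simp
  qed
  then show ?thesis
    by (simp add: dotp_def sum_distrib_left)
qed

lemma riem_metric_conf_metric: "riem_metric n (conf_metric n)"
  unfolding riem_metric_def
proof (intro conjI allI impI ballI)
  show "smooth_on_Rn n (\<lambda>x. conf_metric n x i j)" for i j
    using elementary_smooth_on_Rn[OF elementary_conf_factor] elementary_smooth_on_Rn[OF el_const]
    by (cases "i = j") (simp_all add: conf_metric_def)
  show "conf_metric n x i j = conf_metric n x j i" for x i j
    by (simp add: conf_metric_def)
  fix x v :: "nat \<Rightarrow> real"
  assume "\<exists>i<n. v i \<noteq> 0"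
  then have "sqnorm n v > 0" by (rule sqnorm_pos)
  then show "(\<Sum>i<n. \<Sum>j<n. conf_metric n x i j * v i * v j) > 0"
    by (simp add: conf_metric_form dotp_self conf_factor_pos)
qed

section \<open>Ricci curvature of the conformal metric\<close>

lemma pd_conf_factor:
  assumes "i < n"
  shows "pd i (conf_factor n) x = - x i / (bracket n x)^3"
proof -
  define u where "u t = 1 + sqnorm n x + 2 * t * x i + t\<^sup>2" for t
  have fu: "(\<lambda>t. conf_factor n (shift x i t)) = (\<lambda>t. inverse (sqrt (u t)))"
    using assms by (auto simp: conf_factor_def u_def sqnorm_shift add.assoc)
  have u0: "u 0 = 1 + sqnorm n x" by (simp add: u_def)
  have du: "(u has_real_derivative 2 * x i) (at 0)"
    unfolding u_def by (auto intro!: derivative_eq_intros)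
  have "((\<lambda>t. sqrt (u t)) has_real_derivative inverse (sqrt (u 0)) / 2 * (2 * x i)) (at 0)"
    by (rule DERIV_chain2[OF DERIV_real_sqrt du]) (simp add: u0)
  then have "((\<lambda>t. inverse (sqrt (u t))) has_real_derivative
      - (inverse (sqrt (u 0)) * (inverse (sqrt (u 0)) / 2 * (2 * x i)) * inverse (sqrt (u 0)))) (at 0)"
    by (rule DERIV_inverse') (simp add: u0)
  then have "pd i (conf_factor n) x
      = - (inverse (sqrt (u 0)) * (inverse (sqrt (u 0)) / 2 * (2 * x i)) * inverse (sqrt (u 0)))"
    unfolding fu[symmetric] by (rule pd_eqI)
  also have "\<dots> = - x i / (bracket n x)^3"
    by (simp add: u0 field_simps power3_eq_cube)
  finally show ?thesis .
qed

lemma pd_conf_metric: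
  assumes "i < n"
  shows "pd i (\<lambda>y. conf_metric n y j l) x = (if j = l then - x i / (bracket n x)^3 else 0)"
  using pd_conf_factor[OF assms] pd_const by (simp add: conf_metric_def[abs_def])

lemma ginv_conf_metric:
  assumes "j < n" "k < n"
  shows "ginv n (conf_metric n) x j k = (if j = k then bracket n x else 0)"
proof -
  define inverts where "inverts h \<longleftrightarrow>
      (\<forall>i<n. \<forall>k<n. (\<Sum>j<n. conf_metric n x i j * h j k) = (if i = k then 1 else 0))"
    for h :: "nat \<Rightarrow> nat \<Rightarrow> real"
  have row: "(\<Sum>j<n. conf_metric n x i j * h j k) = conf_factor n x * h i k"
    if "i < n" for i k and h :: "nat \<Rightarrow> nat \<Rightarrow> real"
  proof -
    have "(\<Sum>j<n. conf_metric n x i j * h j k) = (\<Sum>j<n. if i = j then conf_factor n x * h j k else 0)"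
      by (intro sum.cong) (auto simp: conf_metric_def)
    then show ?thesis using that by simp
  qed
  have "inverts (\<lambda>j k. if j = k then bracket n x else 0)"
    unfolding inverts_def
  proof (intro allI impI)
    fix i k assume "i < n" "k < n"
    then show "(\<Sum>j<n. conf_metric n x i j * (if j = k then bracket n x else 0))
        = (if i = k then 1 else 0)"
      using row[of i "\<lambda>j k. if j = k then bracket n x else 0" k] by (simp add: conf_factor_def)
  qed
  then have "inverts (ginv n (conf_metric n) x)"
    unfolding ginv_def inverts_def[symmetric] by (metis someI_ex)
  then have "conf_factor n x * ginv n (conf_metric n) x j k = (if j = k then 1 else 0)"
    using assms row unfolding inverts_def by metis
  then show ?thesis by (auto simp: conf_factor_def field_simps split: if_splits)
qed

text \<open>For a conformal metric \<open>e\<^sup>2\<^sup>f |dx|\<^sup>2\<close> one has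
  \<open>\<Gamma>\<^sup>k\<^sub>i\<^sub>j = \<delta>\<^sub>j\<^sub>k \<partial>\<^sub>if + \<delta>\<^sub>i\<^sub>k \<partial>\<^sub>jf - \<delta>\<^sub>i\<^sub>j \<partial>\<^sub>kf\<close>; here \<open>f = -log (1 + |x|\<^sup>2) / 4\<close>, so
  \<open>\<partial>\<^sub>if = - x\<^sub>i / (2 (1 + |x|\<^sup>2))\<close>. \<open>chr_num_deriv m\<close> is the \<open>\<partial>\<^sub>m\<close>-derivative of \<open>chr_num\<close>.\<close>

definition chr_num :: "nat \<Rightarrow> nat \<Rightarrow> nat \<Rightarrow> (nat \<Rightarrow> real) \<Rightarrow> real" where
  "chr_num k i j x =
      (if j = k then x i else 0) + (if i = k then x j else 0) - (if i = j then x k else 0)"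

definition chr_num_deriv :: "nat \<Rightarrow> nat \<Rightarrow> nat \<Rightarrow> nat \<Rightarrow> real" where
  "chr_num_deriv m k i j = (if j = k \<and> i = m then 1 else 0) + (if i = k \<and> j = m then 1 else 0)
      - (if i = j \<and> k = m then 1 else 0)"

definition chr_conf :: "nat \<Rightarrow> nat \<Rightarrow> nat \<Rightarrow> nat \<Rightarrow> (nat \<Rightarrow> real) \<Rightarrow> real" where
  "chr_conf n k i j x = - chr_num k i j x / (2 * (1 + sqnorm n x))"

lemma bracket_cube: "(bracket n x)^3 = bracket n x * (1 + sqnorm n x)"
proof -
  have "(bracket n x)^3 = bracket n x * (bracket n x)\<^sup>2"
    by (simp add: power3_eq_cube power2_eq_square)
  then show ?thesis by (simp only: bracket_sq)
qed

lemma bracket_mult_div_cube: "bracket n x * (y / (bracket n x)^3) = y / (1 + sqnorm n x)"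
  using bracket_pos[of n x] by (simp add: bracket_cube)

lemma christoffel_conf_metric:
  assumes "i < n" "j < n" "k < n"
  shows "christoffel n (conf_metric n) k i j x = chr_conf n k i j x"
proof -
  let ?B = "\<lambda>l. pd i (\<lambda>y. conf_metric n y j l) x + pd j (\<lambda>y. conf_metric n y i l) x
      - pd l (\<lambda>y. conf_metric n y i j) x"
  have "christoffel n (conf_metric n) k i j x = (1/2) * (\<Sum>l<n. if k = l then bracket n x * ?B l else 0)"
    unfolding christoffel_def
    by (intro arg_cong2[where f="(*)"] refl sum.cong) (auto simp: ginv_conf_metric assms)
  also have "\<dots> = (1/2) * (bracket n x * ?B k)" using assms by simp
  also have "?B k = - chr_num k i j x / (bracket n x)^3"
    using assms by (simp add: pd_conf_metric chr_num_def add_divide_distrib diff_divide_distrib)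
  also have "(1/2) * (bracket n x * (- chr_num k i j x / (bracket n x)^3)) = chr_conf n k i j x"
    by (simp only: bracket_mult_div_cube) (simp add: chr_conf_def)
  finally show ?thesis .
qed

lemma chr_num_shift: "chr_num k i j (shift x m t) = chr_num k i j x + t * chr_num_deriv m k i j"
  by (auto simp: chr_num_def chr_num_deriv_def shift_def algebra_simps)

lemma pd_chr_conf:
  assumes "m < n"
  shows "pd m (chr_conf n k i j) x = - chr_num_deriv m k i j / (2 * (1 + sqnorm n x))
      + chr_num k i j x * x m / (1 + sqnorm n x)\<^sup>2"
proof -
  define q where "q = 1 + sqnorm n x"
  have q: "q > 0" by (simp add: q_def)
  have "(\<lambda>t. chr_conf n k i j (shift x m t))
      = (\<lambda>t. - (chr_num k i j x + t * chr_num_deriv m k i j) / (2 * (q + 2 * t * x m + t\<^sup>2)))"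
    using assms by (auto simp: chr_conf_def chr_num_shift sqnorm_shift q_def add.assoc)
  moreover have "((\<lambda>t. - (chr_num k i j x + t * chr_num_deriv m k i j) / (2 * (q + 2 * t * x m + t\<^sup>2)))
      has_real_derivative
        (- chr_num_deriv m k i j * (2 * q) + chr_num k i j x * (4 * x m)) / (2 * q)\<^sup>2) (at 0)"
    using q by (auto intro!: derivative_eq_intros simp: power2_eq_square field_simps)
  ultimately have "pd m (chr_conf n k i j) x
      = (- chr_num_deriv m k i j * (2 * q) + chr_num k i j x * (4 * x m)) / (2 * q)\<^sup>2"
    by (intro pd_eqI) simp
  also have "\<dots> = - chr_num_deriv m k i j / (2 * q) + chr_num k i j x * x m / q\<^sup>2"
    using q by (simp add: field_simps power2_eq_square)
  finally show ?thesis by (simp add: q_def)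
qed

lemma pd_christoffel_conf_metric:
  assumes "x \<in> Rn n" "m < n" "i < n" "j < n" "k < n"
  shows "pd m (christoffel n (conf_metric n) k i j) x = pd m (chr_conf n k i j) x"
  by (rule pd_cong_Rn[OF _ assms(1,2)]) (use christoffel_conf_metric assms in auto)

lemma if_zero_times: "(if P then a else 0) * (b::real) = (if P then a * b else 0)"
  by simp

lemma times_if_zero: "(b::real) * (if P then a else 0) = (if P then b * a else 0)"
  by simp

lemma sum_sq_eq_sqnorm: "(\<Sum>p<n. x p * x p) = sqnorm n x"
  by (simp add: sqnorm_def power2_eq_square)

lemma chr_num_deriv_diag: "chr_num_deriv k k i j = (if i = j then (if i = k then 2 else 0) - 1 else 0)"
  by (auto simp: chr_num_deriv_def)

lemma sum_chr_num_deriv_trace: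
  "i < n \<Longrightarrow> j < n \<Longrightarrow> (\<Sum>k<n. chr_num_deriv k k i j) = (if i = j then 2 - real n else 0)"
  by (cases "i = j") (simp_all add: chr_num_deriv_diag sum_subtractf)

lemma sum_chr_num_times_coord: "i < n \<Longrightarrow> j < n \<Longrightarrow>
  (\<Sum>k<n. chr_num k i j x * x k) = 2 * x i * x j - (if i = j then sqnorm n x else 0)"
  by (cases "i = j")
     (auto simp: chr_num_def sum.distrib sum_subtractf algebra_simps if_zero_times times_if_zero
        sum_sq_eq_sqnorm)

lemma chr_num_deriv_contract: "chr_num_deriv j k i k = (if i = j then 1 else 0)"
  by (auto simp: chr_num_deriv_def)

lemma chr_num_contract: "chr_num k i k x = x i"
  by (auto simp: chr_num_def)

lemma chr_num_diag: "chr_num k k p x = x p"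
  by (auto simp: chr_num_def)

lemma sum_chr_num_times_chr_num_inner: "i < n \<Longrightarrow> j < n \<Longrightarrow> k < n \<Longrightarrow>
  (\<Sum>p<n. chr_num k j p x * chr_num p i k x) = x i * x j + (if j = k then x i * x k else 0)
     - (if i = j \<and> j = k then sqnorm n x else 0) - (if i = j then x k * x k else 0)
     + (if i = k then x k * x j else 0)"
  by (cases "i = k"; cases "j = k"; cases "i = j")
     (simp_all add: chr_num_def sum.distrib sum_subtractf algebra_simps if_zero_times times_if_zero
        sum_sq_eq_sqnorm)

lemma sum_chr_num_times_chr_num: "i < n \<Longrightarrow> j < n \<Longrightarrow>
  (\<Sum>k<n. \<Sum>p<n. chr_num k j p x * chr_num p i k x)
    = (real n + 2) * x i * x j - (if i = j then 2 * sqnorm n x else 0)"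
  by (cases "i = j")
     (simp_all add: sum_chr_num_times_chr_num_inner sum.distrib sum_subtractf algebra_simps
        sum_sq_eq_sqnorm)

lemma sum_chr_conf_trace_times_chr_conf:
  assumes "i < n" "j < n"
  shows "(\<Sum>k<n. \<Sum>p<n. chr_conf n k k p x * chr_conf n p i j x)
      = real n * (2 * x i * x j - (if i = j then sqnorm n x else 0)) / (4 * (1 + sqnorm n x)\<^sup>2)"
proof -
  have "(\<Sum>k<n. \<Sum>p<n. chr_conf n k k p x * chr_conf n p i j x)
      = (\<Sum>k<n. (\<Sum>p<n. chr_num p i j x * x p) / (4 * (1 + sqnorm n x)\<^sup>2))"
    by (intro sum.cong refl)
       (simp add: chr_conf_def chr_num_diag sum_divide_distrib power2_eq_square algebra_simps)
  then show ?thesis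
    using assms by (simp add: sum_chr_num_times_coord)
qed

lemma sum_chr_conf_times_chr_conf:
  assumes "i < n" "j < n"
  shows "(\<Sum>k<n. \<Sum>p<n. chr_conf n k j p x * chr_conf n p i k x)
      = ((real n + 2) * x i * x j - (if i = j then 2 * sqnorm n x else 0)) / (4 * (1 + sqnorm n x)\<^sup>2)"
proof -
  have "(\<Sum>k<n. \<Sum>p<n. chr_conf n k j p x * chr_conf n p i k x)
      = (\<Sum>k<n. \<Sum>p<n. chr_num k j p x * chr_num p i k x) / (4 * (1 + sqnorm n x)\<^sup>2)"
    by (simp add: chr_conf_def sum_divide_distrib power2_eq_square algebra_simps)
  then show ?thesis
    using assms by (simp add: sum_chr_num_times_chr_num)
qed

lemma ricci_conf_metric:
  assumes x: "x \<in> Rn n" and ij: "i < n" "j < n"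
  shows "ricci n (conf_metric n) x i j =
    (if i = j then (real n - 1) / (1 + sqnorm n x) - sqnorm n x / (1 + sqnorm n x)\<^sup>2
        - (real n - 2) * sqnorm n x / (4 * (1 + sqnorm n x)\<^sup>2) else 0)
    + (- 3 * (real n - 2) / (4 * (1 + sqnorm n x)\<^sup>2)) * x i * x j"
proof -
  define S where "S = sqnorm n x"
  define q where "q = 1 + S"
  have q: "q > 0" by (simp add: q_def S_def)
  have "ricci n (conf_metric n) x i j =
      (\<Sum>k<n. - chr_num_deriv k k i j / (2 * q) + chr_num k i j x * x k / q\<^sup>2)
    - (\<Sum>k<n. - chr_num_deriv j k i k / (2 * q) + chr_num k i k x * x j / q\<^sup>2)
    + (\<Sum>k<n. \<Sum>p<n. chr_conf n k k p x * chr_conf n p i j x)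
    - (\<Sum>k<n. \<Sum>p<n. chr_conf n k j p x * chr_conf n p i k x)"
    unfolding ricci_def using x ij
    by (simp add: sum.distrib sum_subtractf pd_christoffel_conf_metric christoffel_conf_metric
        pd_chr_conf q_def S_def)
  also have "(\<Sum>k<n. - chr_num_deriv k k i j / (2 * q) + chr_num k i j x * x k / q\<^sup>2)
      = - (\<Sum>k<n. chr_num_deriv k k i j) / (2 * q) + (\<Sum>k<n. chr_num k i j x * x k) / q\<^sup>2"
    by (simp add: sum.distrib sum_divide_distrib sum_negf sum_subtractf)
  also have "(\<Sum>k<n. - chr_num_deriv j k i k / (2 * q) + chr_num k i k x * x j / q\<^sup>2)
      = real n * (- (if i = j then 1 else 0) / (2 * q) + x i * x j / q\<^sup>2)"
    by (simp add: chr_num_deriv_contract chr_num_contract)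
  finally have ricci: "ricci n (conf_metric n) x i j =
      - (if i = j then 2 - real n else 0) / (2 * q) + (2 * x i * x j - (if i = j then S else 0)) / q\<^sup>2
    - real n * (- (if i = j then 1 else 0) / (2 * q) + x i * x j / q\<^sup>2)
    + real n * (2 * x i * x j - (if i = j then S else 0)) / (4 * q\<^sup>2)
    - ((real n + 2) * x i * x j - (if i = j then 2 * S else 0)) / (4 * q\<^sup>2)"
    unfolding sum_chr_num_deriv_trace[OF ij] sum_chr_num_times_coord[OF ij]
      sum_chr_conf_trace_times_chr_conf[OF ij] sum_chr_conf_times_chr_conf[OF ij]
    by (simp add: q_def S_def)
  have S: "S = q - 1" by (simp add: q_def)
  show ?thesis
    unfolding ricci S_def[symmetric] q_def[symmetric] unfolding S using q
    by (cases "i = j") (simp_all add: field_simps power2_eq_square)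
qed


lemma quadratic_form_diag_plus_rank_one:
  "(\<Sum>i<n. \<Sum>j<n. ((if i = j then a else 0) + b * x i * x j) * v i * v j)
     = a * sqnorm n v + b * (dotp n x v)\<^sup>2"
proof -
  have "(\<Sum>j<n. ((if i = j then a else 0) + b * x i * x j) * v i * v j)
      = a * (v i)\<^sup>2 + b * (x i * v i) * dotp n x v" if "i < n" for i
  proof -
    have "(\<Sum>j<n. ((if i = j then a else 0) + b * x i * x j) * v i * v j)
        = (\<Sum>j<n. (if i = j then a * v i * v j else 0) + b * (x i * v i) * (x j * v j))"
      by (intro sum.cong refl) (simp add: algebra_simps)
    also have "\<dots> = (\<Sum>j<n. if i = j then a * v i * v j else 0)
        + (\<Sum>j<n. b * (x i * v i) * (x j * v j))"
      by (rule sum.distrib)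
    finally show ?thesis
      using that by (simp add: dotp_def sum_distrib_left power2_eq_square)
  qed
  then have "(\<Sum>i<n. \<Sum>j<n. ((if i = j then a else 0) + b * x i * x j) * v i * v j)
      = (\<Sum>i<n. a * (v i)\<^sup>2 + b * (x i * v i) * dotp n x v)"
    by simp
  also have "\<dots> = a * (\<Sum>i<n. (v i)\<^sup>2) + b * (\<Sum>i<n. x i * v i) * dotp n x v"
    by (simp add: sum.distrib sum_distrib_left sum_distrib_right mult.assoc)
  also have "\<dots> = a * sqnorm n v + b * (dotp n x v)\<^sup>2"
    by (simp add: sqnorm_def power2_eq_square flip: dotp_def)
  finally show ?thesis .
qed

lemma pos_ricci_conf_metric:
  assumes n: "n \<ge> 2"
  shows "pos_ricci n (conf_metric n)"
  unfolding pos_ricci_def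
proof (intro ballI impI)
  fix x v assume x: "x \<in> Rn n" and "v \<in> Rn n" and "\<exists>i<n. v i \<noteq> 0"
  then have V: "sqnorm n v > 0" by (simp add: sqnorm_pos)
  define S where "S = sqnorm n x"
  define q where "q = 1 + S"
  define a where "a = (real n - 1) / q - S / q\<^sup>2 - (real n - 2) * S / (4 * q\<^sup>2)"
  define b where "b = - 3 * (real n - 2) / (4 * q\<^sup>2)"
  have q: "q > 0" by (simp add: q_def S_def)
  have "(\<Sum>i<n. \<Sum>j<n. ricci n (conf_metric n) x i j * v i * v j)
      = (\<Sum>i<n. \<Sum>j<n. ((if i = j then a else 0) + b * x i * x j) * v i * v j)"
    by (intro sum.cong refl) (simp add: ricci_conf_metric[OF x] a_def b_def q_def S_def)
  also have "\<dots> = a * sqnorm n v + b * (dotp n x v)\<^sup>2"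
    by (rule quadratic_form_diag_plus_rank_one)
  also have "\<dots> \<ge> a * sqnorm n v + b * (S * sqnorm n v)"
    using n q dotp_sq_le[of n x v] unfolding S_def b_def
    by (intro add_left_mono mult_left_mono_neg) (auto simp: divide_nonpos_pos)
  moreover have "a * sqnorm n v + b * (S * sqnorm n v) = (real n - 1) / q\<^sup>2 * sqnorm n v"
  proof -
    have S: "S = q - 1" by (simp add: q_def)
    have "a + b * S = (real n - 1) / q\<^sup>2"
      unfolding a_def b_def S using q by (simp add: field_simps power2_eq_square)
    then show ?thesis by (metis distrib_right mult.assoc)
  qed
  moreover have "(real n - 1) / q\<^sup>2 * sqnorm n v > 0" using n q V by simp
  ultimately show "(\<Sum>i<n. \<Sum>j<n. ricci n (conf_metric n) x i j * v i * v j) > 0"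
    by linarith
qed

section \<open>Curves, lengths and the Riemannian distance\<close>

definition cvel :: "(real \<Rightarrow> nat \<Rightarrow> real) \<Rightarrow> nat \<Rightarrow> real \<Rightarrow> real" where
  "cvel c i t = vector_derivative (\<lambda>s. c s i) (at t within {0..1})"

definition speed ::
    "nat \<Rightarrow> ((nat \<Rightarrow> real) \<Rightarrow> nat \<Rightarrow> nat \<Rightarrow> real) \<Rightarrow> (real \<Rightarrow> nat \<Rightarrow> real) \<Rightarrow> real \<Rightarrow> real" where
  "speed n g c t = sqrt (\<Sum>i<n. \<Sum>j<n. g (c t) i j * cvel c i t * cvel c j t)"

lemma curve_length_eq_integral_speed: "curve_length n g c = integral {0..1} (speed n g c)"
  by (simp add: curve_length_def speed_def[abs_def] cvel_def)

lemma riem_metric_form_nonneg: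
  assumes "riem_metric n g" "x \<in> Rn n"
  shows "0 \<le> (\<Sum>i<n. \<Sum>j<n. g x i j * v i * v j)"
proof -
  define w where "w i = (if i < n then v i else 0)" for i
  have "w \<in> Rn n" by (simp add: w_def Rn_def)
  have form: "(\<Sum>i<n. \<Sum>j<n. g x i j * v i * v j) = (\<Sum>i<n. \<Sum>j<n. g x i j * w i * w j)"
    by (simp add: w_def)
  show ?thesis
  proof (cases "\<exists>i<n. w i \<noteq> 0")
    case True
    with assms \<open>w \<in> Rn n\<close> show ?thesis
      unfolding form riem_metric_def by (meson less_imp_le)
  qed (simp add: form)
qed

lemma curve_length_nonneg:
  assumes "riem_metric n g" "adm_curve n c"
  shows "0 \<le> curve_length n g c"
proof (cases "speed n g c integrable_on {0..1}")
  case True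
  have "c t \<in> Rn n" if "t \<in> {0..1}" for t
    using assms(2) that by (simp add: adm_curve_def)
  with True show ?thesis
    unfolding curve_length_eq_integral_speed
    by (intro Henstock_Kurzweil_Integration.integral_nonneg)
       (simp_all add: speed_def riem_metric_form_nonneg[OF assms(1)])
qed (simp add: curve_length_eq_integral_speed not_integrable_integral)

lemma adm_curveI:
  assumes "\<And>t. t \<in> {0..1} \<Longrightarrow> c t \<in> Rn n"
    and "\<And>i t. i < n \<Longrightarrow> t \<in> {0..1} \<Longrightarrow> ((\<lambda>s. c s i) has_real_derivative D i t) (at t)"
    and "\<And>i. i < n \<Longrightarrow> continuous_on {0..1} (D i)"
  shows "adm_curve n c"
  unfolding adm_curve_def C1_differentiable_on_def
proof (intro conjI ballI allI impI)
  fix i assume "i < n"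
  with assms(2,3) show "\<exists>D'. (\<forall>x\<in>{0..1}. ((\<lambda>t. c t i) has_vector_derivative D' x) (at x))
      \<and> continuous_on {0..1} D'"
    by (intro exI[of _ "D i"]) (auto simp: has_real_derivative_iff_has_vector_derivative)
qed (use assms(1) in blast)

lemma cvel_eqI:
  assumes "((\<lambda>s. c s i) has_real_derivative d) (at t)" "t \<in> {0..1}"
  shows "cvel c i t = d"
  unfolding cvel_def using assms
  by (intro vector_derivative_within_closed_interval)
     (auto intro: has_field_derivative_at_within
        simp: has_real_derivative_iff_has_vector_derivative[symmetric])

lemma adm_curve_has_derivative:
  assumes "adm_curve n c" "i < n" "t \<in> {0..1}"
  shows "((\<lambda>s. c s i) has_real_derivative cvel c i t) (at t)"
proof -
  from assms obtain D where D: "\<forall>x\<in>{0..1}. ((\<lambda>s. c s i) has_vector_derivative D x) (at x)"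
    unfolding adm_curve_def C1_differentiable_on_def by blast
  with assms(3) have "cvel c i t = D t"
    by (simp add: cvel_eqI has_real_derivative_iff_has_vector_derivative)
  with D assms(3) show ?thesis by (simp add: has_real_derivative_iff_has_vector_derivative)
qed

lemma continuous_on_cvel:
  assumes "adm_curve n c" "i < n"
  shows "continuous_on {0..1} (cvel c i)"
proof -
  from assms obtain D where D: "\<forall>x\<in>{0..1}. ((\<lambda>s. c s i) has_vector_derivative D x) (at x)"
    and "continuous_on {0..1} D"
    unfolding adm_curve_def C1_differentiable_on_def by blast
  moreover from D have "\<forall>t\<in>{0..1}. D t = cvel c i t"
    by (auto intro!: cvel_eqI[symmetric] simp: has_real_derivative_iff_has_vector_derivative)
  ultimately show ?thesis using continuous_on_cong by blast
qed

lemma continuous_on_adm_curve: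
  assumes "adm_curve n c" "i < n"
  shows "continuous_on {0..1} (\<lambda>t. c t i)"
  using assms unfolding adm_curve_def
  by (meson C1_diff_imp_diff differentiable_imp_continuous_on)

definition segment_curve :: "(nat \<Rightarrow> real) \<Rightarrow> (nat \<Rightarrow> real) \<Rightarrow> real \<Rightarrow> nat \<Rightarrow> real" where
  "segment_curve x y t = (\<lambda>i. x i + t * (y i - x i))"

lemma segment_curve_ends [simp]: "segment_curve x y 0 = x" "segment_curve x y 1 = y"
  by (auto simp: segment_curve_def)

lemma adm_curve_segment_curve: "x \<in> Rn n \<Longrightarrow> y \<in> Rn n \<Longrightarrow> adm_curve n (segment_curve x y)"
  unfolding adm_curve_def segment_curve_def
  by (auto simp: Rn_def intro!: C1_differentiable_on_add C1_differentiable_on_mult)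

lemma cvel_segment_curve: "t \<in> {0..1} \<Longrightarrow> cvel (segment_curve x y) i t = y i - x i"
  by (rule cvel_eqI) (auto simp: segment_curve_def intro!: derivative_eq_intros)

lemma curve_length_le:
  assumes "speed n g c integrable_on {0..1}" "\<And>t. t \<in> {0..1} \<Longrightarrow> speed n g c t \<le> B"
  shows "curve_length n g c \<le> B"
  using integral_le[OF assms(1) integrable_const_ivl, of B] assms(2)
  by (simp add: curve_length_eq_integral_speed)

lemma diff_le_curve_length:
  assumes "speed n g c integrable_on {0..1}"
    and "\<And>t. t \<in> {0..1} \<Longrightarrow> ((\<lambda>s. F (c s)) has_real_derivative h t) (at t within {0..1})"
    and "\<And>t. t \<in> {0..1} \<Longrightarrow> h t \<le> speed n g c t"
  shows "F (c 1) - F (c 0) \<le> curve_length n g c"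
proof -
  have "(h has_integral (F (c 1) - F (c 0))) {0..1}"
    using fundamental_theorem_of_calculus[of 0 1 "\<lambda>s. F (c s)" h] assms(2)
    by (simp add: has_real_derivative_iff_has_vector_derivative)
  then show ?thesis
    unfolding curve_length_eq_integral_speed
    using has_integral_le[OF _ integrable_integral[OF assms(1)]] assms(3) by blast
qed

lemma rdist_le_curve_length:
  assumes "riem_metric n g" "adm_curve n c" "c 0 = x" "c 1 = y"
  shows "rdist n g x y \<le> curve_length n g c"
  unfolding rdist_def
proof (rule cInf_lower)
  show "curve_length n g c \<in> {curve_length n g c | c. adm_curve n c \<and> c 0 = x \<and> c 1 = y}"
    using assms by blast
  show "bdd_below {curve_length n g c | c. adm_curve n c \<and> c 0 = x \<and> c 1 = y}"
    by (rule bdd_belowI[of _ 0]) (use curve_length_nonneg[OF assms(1)] in blast)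
qed

lemma le_rdistI:
  assumes "x \<in> Rn n" "y \<in> Rn n"
    and "\<And>c. adm_curve n c \<Longrightarrow> c 0 = x \<Longrightarrow> c 1 = y \<Longrightarrow> B \<le> curve_length n g c"
  shows "B \<le> rdist n g x y"
  unfolding rdist_def
proof (rule cInf_greatest)
  show "{curve_length n g c | c. adm_curve n c \<and> c 0 = x \<and> c 1 = y} \<noteq> {}"
    using adm_curve_segment_curve[OF assms(1,2)] segment_curve_ends by blast
qed (use assms(3) in blast)

lemma rdist_nonneg: "riem_metric n g \<Longrightarrow> x \<in> Rn n \<Longrightarrow> y \<in> Rn n \<Longrightarrow> 0 \<le> rdist n g x y"
  by (rule le_rdistI) (simp_all add: curve_length_nonneg)

lemma rdist_invariant:
  assumes "\<And>c. adm_curve n c \<Longrightarrow> adm_curve n (\<lambda>t. T (c t))"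
    and "\<And>c. adm_curve n c \<Longrightarrow> curve_length n g (\<lambda>t. T (c t)) = curve_length n g c"
    and "T p = p" "\<And>x. T (T x) = x"
  shows "rdist n g p (T x) = rdist n g p x"
proof -
  define lengths where "lengths y = {curve_length n g c | c. adm_curve n c \<and> c 0 = p \<and> c 1 = y}" for y
  have sub: "lengths y \<subseteq> lengths (T y)" for y
  proof
    fix L assume "L \<in> lengths y"
    then obtain c where "adm_curve n c" "c 0 = p" "c 1 = y" "L = curve_length n g c"
      by (auto simp: lengths_def)
    with assms show "L \<in> lengths (T y)"
      unfolding lengths_def by (intro CollectI exI[of _ "\<lambda>t. T (c t)"]) simp
  qed
  have "lengths (T x) = lengths x"
    using sub[of x] sub[of "T x"] by (simp add: assms(4))
  then show ?thesis by (simp add: rdist_def flip: lengths_def)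
qed

section \<open>Distance estimates for the conformal metric\<close>

lemma speed_conf_metric:
  "speed n (conf_metric n) c t = sqrt (conf_factor n (c t) * sqnorm n (\<lambda>i. cvel c i t))"
  by (simp add: speed_def conf_metric_form dotp_self)

lemma continuous_on_speed_conf_metric:
  assumes "adm_curve n c"
  shows "continuous_on {0..1} (speed n (conf_metric n) c)"
proof -
  have "continuous_on {0..1} (\<lambda>t. sqrt (inverse (sqrt (1 + (\<Sum>i<n. (c t i)\<^sup>2)))
      * (\<Sum>i<n. (cvel c i t)\<^sup>2)))"
    using continuous_on_adm_curve[OF assms] continuous_on_cvel[OF assms]
      one_plus_sqnorm_neq_0[of n, unfolded sqnorm_def]
    by (intro continuous_intros) auto
  then show ?thesis
    by (simp add: speed_conf_metric[abs_def] conf_factor_def sqnorm_def)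
qed

lemma integrable_speed_conf_metric:
  "adm_curve n c \<Longrightarrow> speed n (conf_metric n) c integrable_on {0..1}"
  by (rule integrable_continuous_interval[OF continuous_on_speed_conf_metric])

lemma rdist_conf_metric_le_euclidean:
  assumes "x \<in> Rn n" "y \<in> Rn n"
  shows "rdist n (conf_metric n) x y \<le> sqrt (sqnorm n (\<lambda>i. y i - x i))"
proof -
  have "curve_length n (conf_metric n) (segment_curve x y) \<le> sqrt (sqnorm n (\<lambda>i. y i - x i))"
  proof (rule curve_length_le[OF integrable_speed_conf_metric[OF adm_curve_segment_curve[OF assms]]])
    fix t :: real assume "t \<in> {0..1}"
    then have "speed n (conf_metric n) (segment_curve x y) t
        = sqrt (conf_factor n (segment_curve x y t) * sqnorm n (\<lambda>i. y i - x i))"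
      by (simp add: speed_conf_metric cvel_segment_curve)
    also have "\<dots> \<le> sqrt (1 * sqnorm n (\<lambda>i. y i - x i))"
      by (intro real_sqrt_le_mono mult_right_mono conf_factor_le_1 sqnorm_nonneg)
    finally show "speed n (conf_metric n) (segment_curve x y) t \<le> sqrt (sqnorm n (\<lambda>i. y i - x i))"
      by simp
  qed
  then show ?thesis
    using rdist_le_curve_length[OF riem_metric_conf_metric adm_curve_segment_curve[OF assms]
        segment_curve_ends] by linarith
qed

definition lipfun :: "nat \<Rightarrow> (nat \<Rightarrow> real) \<Rightarrow> (nat \<Rightarrow> real) \<Rightarrow> real" where
  "lipfun n e x = sqrt (2 * (bracket n x + dotp n x e))"

lemma abs_dotp_less_bracket:
  assumes "sqnorm n e = 1"
  shows "\<bar>dotp n x e\<bar> < bracket n x"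
proof -
  have "(dotp n x e)\<^sup>2 < 1 + sqnorm n x" using dotp_sq_le[of n x e] assms by simp
  then show ?thesis by (metis real_sqrt_abs real_sqrt_less_mono)
qed

lemma lipfun_radicand_pos: "sqnorm n e = 1 \<Longrightarrow> 0 < bracket n x + dotp n x e"
  using abs_dotp_less_bracket[of n e x] by linarith

lemma lipfun_pos: "sqnorm n e = 1 \<Longrightarrow> 0 < lipfun n e x"
  using lipfun_radicand_pos[of n e x] by (simp add: lipfun_def)

lemma lipfun_sq: "sqnorm n e = 1 \<Longrightarrow> (lipfun n e x)\<^sup>2 = 2 * (bracket n x + dotp n x e)"
  unfolding lipfun_def using lipfun_radicand_pos[of n e x] by simp

lemma dotp_has_derivative:
  assumes "\<And>i. i < n \<Longrightarrow> ((\<lambda>s. c s i) has_real_derivative c' i) (at t)"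
  shows "((\<lambda>s. dotp n (c s) e) has_real_derivative dotp n c' e) (at t)"
  unfolding dotp_def by (rule DERIV_sum) (simp add: DERIV_cmult_right assms)

lemma sqnorm_has_derivative:
  assumes "\<And>i. i < n \<Longrightarrow> ((\<lambda>s. c s i) has_real_derivative c' i) (at t)"
  shows "((\<lambda>s. sqnorm n (c s)) has_real_derivative 2 * dotp n (c t) c') (at t)"
proof -
  have "((\<lambda>s. \<Sum>i<n. c s i * c s i) has_real_derivative (\<Sum>i<n. c' i * c t i + c' i * c t i)) (at t)"
    by (rule DERIV_sum, rule DERIV_mult) (simp_all add: assms)
  then show ?thesis
    by (simp add: sqnorm_def dotp_def power2_eq_square sum_distrib_left mult_ac)
qed

lemma lipfun_has_derivative:
  assumes e: "sqnorm n e = 1"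
    and d: "\<And>i. i < n \<Longrightarrow> ((\<lambda>s. c s i) has_real_derivative c' i) (at t)"
  shows "((\<lambda>s. lipfun n e (c s)) has_real_derivative
      dotp n (\<lambda>i. c t i / bracket n (c t) + e i) c' / lipfun n e (c t)) (at t)"
proof -
  define A where "A = bracket n (c t)"
  define L where "L = lipfun n e (c t)"
  have dS: "((\<lambda>s. 1 + sqnorm n (c s)) has_real_derivative 2 * dotp n (c t) c') (at t)"
    using DERIV_add[OF DERIV_const sqnorm_has_derivative[OF d]] by simp
  have "((\<lambda>s. bracket n (c s)) has_real_derivative inverse A / 2 * (2 * dotp n (c t) c')) (at t)"
    unfolding A_def by (rule DERIV_chain2[OF DERIV_real_sqrt dS]) simp
  then have dU: "((\<lambda>s. 2 * (bracket n (c s) + dotp n (c s) e)) has_real_derivative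
      2 * (inverse A / 2 * (2 * dotp n (c t) c') + dotp n c' e)) (at t)"
    by (intro DERIV_cmult DERIV_add dotp_has_derivative[OF d])
  have "((\<lambda>s. lipfun n e (c s)) has_real_derivative
      inverse L / 2 * (2 * (inverse A / 2 * (2 * dotp n (c t) c') + dotp n c' e))) (at t)"
    unfolding lipfun_def L_def
    by (rule DERIV_chain2[OF DERIV_real_sqrt dU]) (use lipfun_radicand_pos[OF e, of "c t"] in simp)
  moreover have dot: "dotp n (\<lambda>i. c t i / A + e i) c' = dotp n (c t) c' / A + dotp n c' e"
    using dotp_lin[of n "1 / A" "c t" 1 e c'] dotp_commute[of n c' e] by simp
  moreover have pos: "A > 0" "L > 0"
    unfolding A_def L_def lipfun_def using lipfun_radicand_pos[OF e, of "c t"] by simp_all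
  ultimately show ?thesis
    unfolding A_def[symmetric] L_def[symmetric] dot by (elim DERIV_cong) (simp add: field_simps)
qed

lemma lipfun_derivative_bound:
  assumes e: "sqnorm n e = 1"
  shows "\<bar>dotp n (\<lambda>i. x i / bracket n x + e i) v / lipfun n e x\<bar>
      \<le> sqrt (conf_factor n x * sqnorm n v)"
proof -
  define A where "A = bracket n x"
  define w where "w = (\<lambda>i. (1 / A) * x i + 1 * e i)"
  define L where "L = lipfun n e x"
  have A: "A > 0" "A\<^sup>2 = 1 + sqnorm n x" by (simp_all add: A_def)
  have L: "L > 0" "L\<^sup>2 = 2 * (A + dotp n x e)"
    using lipfun_pos[OF e] lipfun_sq[OF e] by (simp_all add: L_def A_def)
  have "sqnorm n w = sqnorm n x / A\<^sup>2 + 2 * dotp n x e / A + 1"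
    unfolding w_def sqnorm_lin using e by (simp add: power_divide)
  also have "\<dots> \<le> L\<^sup>2 / A"
  proof -
    have "sqnorm n x / A\<^sup>2 \<le> 1" using A by simp
    moreover have "L\<^sup>2 / A = 2 + 2 * dotp n x e / A"
      using A(1) unfolding L(2) by (simp add: field_simps)
    ultimately show ?thesis by linarith
  qed
  finally have w: "sqnorm n w \<le> L\<^sup>2 / A" .
  have "(dotp n w v / L)\<^sup>2 \<le> sqnorm n w * sqnorm n v / L\<^sup>2"
    using dotp_sq_le[of n w v] by (simp add: power_divide divide_right_mono)
  also have "\<dots> \<le> L\<^sup>2 / A * sqnorm n v / L\<^sup>2"
    using w by (intro divide_right_mono mult_right_mono) simp_all
  also have "\<dots> = conf_factor n x * sqnorm n v"
    using L(1) by (simp add: conf_factor_def A_def field_simps)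
  finally have "\<bar>dotp n w v / L\<bar> \<le> sqrt (conf_factor n x * sqnorm n v)"
    by (metis real_sqrt_abs real_sqrt_le_mono)
  moreover have "w = (\<lambda>i. x i / bracket n x + e i)" by (simp add: w_def A_def)
  ultimately show ?thesis by (simp add: L_def)
qed

lemma lipfun_diff_le_curve_length:
  assumes c: "adm_curve n c" and e: "sqnorm n e = 1"
  shows "\<bar>lipfun n e (c 1) - lipfun n e (c 0)\<bar> \<le> curve_length n (conf_metric n) c"
proof -
  define h where "h t = dotp n (\<lambda>i. c t i / bracket n (c t) + e i) (\<lambda>i. cvel c i t)
      / lipfun n e (c t)" for t
  have d: "((\<lambda>s. lipfun n e (c s)) has_real_derivative h t) (at t within {0..1})"
    if "t \<in> {0..1}" for t
  proof -
    have "((\<lambda>s. c s i) has_real_derivative cvel c i t) (at t)" if "i < n" for i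
      using adm_curve_has_derivative[OF c that \<open>t \<in> {0..1}\<close>] .
    from lipfun_has_derivative[OF e this] show ?thesis
      unfolding h_def by (rule has_field_derivative_at_within)
  qed
  have b: "\<bar>h t\<bar> \<le> speed n (conf_metric n) c t" for t
    unfolding h_def speed_conf_metric by (rule lipfun_derivative_bound[OF e])
  have "lipfun n e (c 1) - lipfun n e (c 0) \<le> curve_length n (conf_metric n) c"
    using d b by (intro diff_le_curve_length[OF integrable_speed_conf_metric[OF c]])
      (auto intro: order_trans[OF abs_ge_self])
  moreover have "(- lipfun n e (c 1)) - (- lipfun n e (c 0)) \<le> curve_length n (conf_metric n) c"
    using DERIV_minus[OF d] b
    by (intro diff_le_curve_length[OF integrable_speed_conf_metric[OF c], where h = "\<lambda>t. - h t"])
      (auto intro: order_trans[OF abs_ge_minus_self])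
  ultimately show ?thesis by linarith
qed

lemma lipfun_diff_le_rdist:
  assumes "x \<in> Rn n" "y \<in> Rn n" "sqnorm n e = 1"
  shows "\<bar>lipfun n e y - lipfun n e x\<bar> \<le> rdist n (conf_metric n) x y"
  by (rule le_rdistI[OF assms(1,2)]) (use lipfun_diff_le_curve_length assms(3) in blast)

section \<open>Completeness\<close>

definition axis_vec :: "nat \<Rightarrow> real \<Rightarrow> nat \<Rightarrow> real" where
  "axis_vec i a = (\<lambda>j. if j = i then a else 0)"

lemma axis_vec_in_Rn: "i < n \<Longrightarrow> axis_vec i a \<in> Rn n"
  by (simp add: axis_vec_def Rn_def)

lemma sqnorm_axis_vec: "i < n \<Longrightarrow> sqnorm n (axis_vec i a) = a\<^sup>2"
  by (simp add: sqnorm_def axis_vec_def if_distrib[of "\<lambda>x. x\<^sup>2"] cong: if_cong)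

lemma dotp_axis_vec: "i < n \<Longrightarrow> dotp n x (axis_vec i a) = a * x i"
  by (simp add: dotp_def axis_vec_def if_distrib[of "\<lambda>y. _ * y"] mult.commute cong: if_cong)

lemma coord_eq_lipfun:
  assumes "i < n"
  shows "x i = ((lipfun n (axis_vec i 1) x)\<^sup>2 - (lipfun n (axis_vec i (-1)) x)\<^sup>2) / 4"
  using assms by (simp add: lipfun_sq sqnorm_axis_vec dotp_axis_vec)

lemma convergent_lipfun:
  assumes "\<And>m. s m \<in> Rn n" "sqnorm n e = 1"
    and "\<And>r. r > 0 \<Longrightarrow> \<exists>N. \<forall>m\<ge>N. \<forall>k\<ge>N. rdist n (conf_metric n) (s m) (s k) < r"
  shows "convergent (\<lambda>m. lipfun n e (s m))"
proof (rule Cauchy_convergent, rule metric_CauchyI)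
  fix r :: real assume "r > 0"
  then obtain N where N: "\<forall>m\<ge>N. \<forall>k\<ge>N. rdist n (conf_metric n) (s m) (s k) < r"
    using assms(3) by blast
  have "dist (lipfun n e (s m)) (lipfun n e (s k)) < r" if "N \<le> m" "N \<le> k" for m k
  proof -
    have "dist (lipfun n e (s m)) (lipfun n e (s k)) \<le> rdist n (conf_metric n) (s m) (s k)"
      using lipfun_diff_le_rdist[OF assms(1)[of m] assms(1)[of k] assms(2)]
      by (simp add: dist_real_def abs_minus_commute)
    also have "\<dots> < r" using N that by blast
    finally show ?thesis .
  qed
  then show "\<exists>N. \<forall>m\<ge>N. \<forall>k\<ge>N. dist (lipfun n e (s m)) (lipfun n e (s k)) < r"
    by blast
qed

lemma complete_metric_conf_metric: "complete_metric n (conf_metric n)"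
  unfolding complete_metric_def
proof (intro allI impI)
  fix s :: "nat \<Rightarrow> nat \<Rightarrow> real"
  assume "(\<forall>m. s m \<in> Rn n) \<and> (\<forall>r>0. \<exists>N. \<forall>m\<ge>N. \<forall>k\<ge>N. rdist n (conf_metric n) (s m) (s k) < r)"
  then have s: "\<And>m. s m \<in> Rn n"
    and cauchy: "\<And>r. r > 0 \<Longrightarrow> \<exists>N. \<forall>m\<ge>N. \<forall>k\<ge>N. rdist n (conf_metric n) (s m) (s k) < r"
    by auto
  define x where "x = (\<lambda>i. if i < n then lim (\<lambda>m. s m i) else 0)"
  have x: "x \<in> Rn n" by (simp add: x_def Rn_def)
  have coord: "(\<lambda>m. s m i) \<longlonglongrightarrow> x i" if i: "i < n" for i
  proof -
    obtain a b where "(\<lambda>m. lipfun n (axis_vec i 1) (s m)) \<longlonglongrightarrow> a"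
      and "(\<lambda>m. lipfun n (axis_vec i (-1)) (s m)) \<longlonglongrightarrow> b"
      using convergent_lipfun[OF s _ cauchy] sqnorm_axis_vec[OF i] by (force simp: convergent_def)
    then have "(\<lambda>m. ((lipfun n (axis_vec i 1) (s m))\<^sup>2 - (lipfun n (axis_vec i (-1)) (s m))\<^sup>2) / 4)
        \<longlonglongrightarrow> (a\<^sup>2 - b\<^sup>2) / 4"
      by (auto intro!: tendsto_intros)
    then have "convergent (\<lambda>m. s m i)"
      unfolding convergent_def by (auto simp flip: coord_eq_lipfun[OF i])
    then show ?thesis using i by (simp add: x_def convergent_LIMSEQ_iff)
  qed
  have "(\<lambda>m. sqrt (sqnorm n (\<lambda>i. x i - s m i))) \<longlonglongrightarrow> sqrt (sqnorm n (\<lambda>i. x i - x i))"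
    unfolding sqnorm_def using coord by (intro tendsto_intros) auto
  then have euclidean: "(\<lambda>m. sqrt (sqnorm n (\<lambda>i. x i - s m i))) \<longlonglongrightarrow> 0"
    by (simp add: sqnorm_def)
  have "\<forall>m. 0 \<le> rdist n (conf_metric n) (s m) x"
    using rdist_nonneg[OF riem_metric_conf_metric s x] by blast
  moreover have "\<forall>m. rdist n (conf_metric n) (s m) x \<le> sqrt (sqnorm n (\<lambda>i. x i - s m i))"
    using rdist_conf_metric_le_euclidean[OF s x] by blast
  ultimately have "(\<lambda>m. rdist n (conf_metric n) (s m) x) \<longlonglongrightarrow> 0"
    by (intro tendsto_sandwich[OF _ _ tendsto_const euclidean] always_eventually)
  with x show "\<exists>x\<in>Rn n. (\<lambda>m. rdist n (conf_metric n) (s m) x) \<longlonglongrightarrow> 0" by blast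
qed

section \<open>Large geodesic spheres\<close>

definition reflect :: "nat \<Rightarrow> (nat \<Rightarrow> real) \<Rightarrow> (nat \<Rightarrow> real) \<Rightarrow> (nat \<Rightarrow> real)" where
  "reflect n e x = (\<lambda>i. x i - 2 * dotp n x e * e i)"

lemma reflect_eq_lin: "reflect n e x = (\<lambda>i. 1 * x i + (- 2 * dotp n x e) * e i)"
  by (simp add: reflect_def)

lemma sqnorm_reflect: "sqnorm n e = 1 \<Longrightarrow> sqnorm n (reflect n e x) = sqnorm n x"
  unfolding reflect_eq_lin sqnorm_lin by (simp add: power2_eq_square)

lemma dotp_reflect: "sqnorm n e = 1 \<Longrightarrow> dotp n (reflect n e x) e = - dotp n x e"
  unfolding reflect_eq_lin dotp_lin by (simp add: dotp_self)

lemma reflect_reflect: "sqnorm n e = 1 \<Longrightarrow> reflect n e (reflect n e x) = x"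
  using dotp_reflect[of n e x]
  by (simp add: reflect_def[of n e "reflect n e x"]) (simp add: reflect_def)

lemma reflect_in_Rn: "e \<in> Rn n \<Longrightarrow> x \<in> Rn n \<Longrightarrow> reflect n e x \<in> Rn n"
  by (simp add: reflect_def Rn_def)

lemma reflect_orthogonal: "dotp n p e = 0 \<Longrightarrow> reflect n e p = p"
  by (simp add: reflect_def)

lemma reflect_has_derivative:
  assumes "\<And>i. i < n \<Longrightarrow> ((\<lambda>s. c s i) has_real_derivative c' i) (at t)" "i < n"
  shows "((\<lambda>s. reflect n e (c s) i) has_real_derivative reflect n e c' i) (at t)"
  unfolding reflect_def
  by (intro DERIV_diff DERIV_cmult DERIV_cmult_right dotp_has_derivative assms)

lemma
  assumes c: "adm_curve n c" and e: "sqnorm n e = 1" "e \<in> Rn n"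
  shows adm_curve_reflect: "adm_curve n (\<lambda>t. reflect n e (c t))"
    and curve_length_reflect:
      "curve_length n (conf_metric n) (\<lambda>t. reflect n e (c t)) = curve_length n (conf_metric n) c"
proof -
  have d: "((\<lambda>s. reflect n e (c s) i) has_real_derivative reflect n e (\<lambda>j. cvel c j t) i) (at t)"
    if "i < n" "t \<in> {0..1}" for i t
    using adm_curve_has_derivative[OF c _ that(2)] that(1) by (rule reflect_has_derivative)
  show "adm_curve n (\<lambda>t. reflect n e (c t))"
  proof (rule adm_curveI[OF _ d])
    show "reflect n e (c t) \<in> Rn n" if "t \<in> {0..1}" for t
      using c e(2) that by (simp add: adm_curve_def reflect_in_Rn)
    show "continuous_on {0..1} (\<lambda>t. reflect n e (\<lambda>j. cvel c j t) i)" if "i < n" for i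
      unfolding reflect_def dotp_def using continuous_on_cvel[OF c] that
      by (intro continuous_intros) auto
  qed
  have "speed n (conf_metric n) (\<lambda>t. reflect n e (c t)) t = speed n (conf_metric n) c t"
    if "t \<in> {0..1}" for t
  proof -
    have "sqnorm n (\<lambda>i. cvel (\<lambda>t. reflect n e (c t)) i t) = sqnorm n (reflect n e (\<lambda>j. cvel c j t))"
      unfolding sqnorm_def
    proof (intro sum.cong refl)
      fix i assume "i \<in> {..<n}"
      with d[of i t] that
      show "(cvel (\<lambda>t. reflect n e (c t)) i t)\<^sup>2 = (reflect n e (\<lambda>j. cvel c j t) i)\<^sup>2"
        by (simp add: cvel_eqI)
    qed
    then show ?thesis by (simp add: speed_conf_metric conf_factor_def sqnorm_reflect e)
  qed
  then show "curve_length n (conf_metric n) (\<lambda>t. reflect n e (c t)) = curve_length n (conf_metric n) c"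
    unfolding curve_length_eq_integral_speed by (intro integral_cong) auto
qed

lemma rdist_reflect:
  assumes "sqnorm n e = 1" "e \<in> Rn n" "dotp n p e = 0"
  shows "rdist n (conf_metric n) p (reflect n e x) = rdist n (conf_metric n) p x"
  using assms by (intro rdist_invariant adm_curve_reflect curve_length_reflect
      reflect_orthogonal reflect_reflect)

lemma exists_unit_orthogonal:
  assumes n: "n \<ge> 2"
  shows "\<exists>e. e \<in> Rn n \<and> sqnorm n e = 1 \<and> dotp n p e = 0"
proof (cases "p 0 = 0 \<and> p 1 = 0")
  case True
  with n show ?thesis
    by (intro exI[of _ "axis_vec 0 1"]) (simp add: axis_vec_in_Rn sqnorm_axis_vec dotp_axis_vec)
next
  case False
  define m where "m = sqrt ((p 0)\<^sup>2 + (p 1)\<^sup>2)"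
  have m: "m > 0" "m\<^sup>2 = (p 0)\<^sup>2 + (p 1)\<^sup>2"
    using False by (auto simp: m_def add_pos_nonneg add_nonneg_pos)
  define e where "e = (\<lambda>i. (- p 1 / m) * axis_vec 0 1 i + (p 0 / m) * axis_vec 1 1 i)"
  have "e \<in> Rn n" using n by (auto simp: Rn_def axis_vec_def e_def)
  moreover have "sqnorm n e = 1"
  proof -
    have "sqnorm n e = (p 1 / m)\<^sup>2 + (p 0 / m)\<^sup>2"
      using n unfolding e_def sqnorm_lin
      by (simp add: sqnorm_axis_vec dotp_axis_vec) (simp add: axis_vec_def)
    also have "\<dots> = ((p 0)\<^sup>2 + (p 1)\<^sup>2) / m\<^sup>2"
      by (simp add: power_divide add_divide_distrib add.commute)
    finally show ?thesis using m False by simp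
  qed
  moreover have "dotp n p e = 0"
    using n unfolding dotp_commute[of n p] e_def dotp_lin
    by (simp add: dotp_commute[of n "axis_vec _ _" p] dotp_axis_vec)
  ultimately show ?thesis by blast
qed

text \<open>The ray through \<open>l e\<close> is reached from \<open>p \<perp> e\<close> along \<open>t \<mapsto> (1 - t) p + t\<^sup>2 l e\<close>:
  the conformal factor at its points is at most \<open>1 / (t\<^sup>2 l)\<close>, which absorbs the growing
  velocity \<open>2 t l e\<close>.\<close>

lemma conf_factor_times_sqnorm_parabola_le:
  assumes e: "sqnorm n e = 1" "dotp n p e = 0" and l: "0 \<le> l"
  shows "conf_factor n (\<lambda>i. (1 - t) * p i + (t\<^sup>2 * l) * e i)
      * sqnorm n (\<lambda>i. (- 1) * p i + (2 * t * l) * e i) \<le> sqnorm n p + 4 * l"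
proof -
  define Q where "Q = bracket n (\<lambda>i. (1 - t) * p i + (t\<^sup>2 * l) * e i)"
  have "sqnorm n (\<lambda>i. (1 - t) * p i + (t\<^sup>2 * l) * e i) = (1 - t)\<^sup>2 * sqnorm n p + t ^ 4 * l\<^sup>2"
    unfolding sqnorm_lin using e by (simp add: power_mult_distrib flip: power_mult)
  then have "t\<^sup>2 * l \<le> Q"
    unfolding Q_def using l
    by (intro real_le_rsqrt) (simp add: power_mult_distrib add_nonneg_nonneg flip: power_mult)
  moreover have Q1: "1 \<le> Q" by (simp add: Q_def)
  ultimately have "4 * t\<^sup>2 * l\<^sup>2 / Q \<le> 4 * l"
  proof -
    have "4 * t\<^sup>2 * l\<^sup>2 = 4 * l * (t\<^sup>2 * l)" by (simp add: power2_eq_square)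
    also have "\<dots> \<le> 4 * l * Q" using \<open>t\<^sup>2 * l \<le> Q\<close> l by (intro mult_left_mono) auto
    finally show ?thesis using Q1 by (simp add: divide_le_eq)
  qed
  moreover have "sqnorm n p / Q \<le> sqnorm n p"
    using divide_left_mono[OF Q1 sqnorm_nonneg[of n p]] Q1 by simp
  moreover have "conf_factor n (\<lambda>i. (1 - t) * p i + (t\<^sup>2 * l) * e i)
      * sqnorm n (\<lambda>i. (- 1) * p i + (2 * t * l) * e i) = sqnorm n p / Q + 4 * t\<^sup>2 * l\<^sup>2 / Q"
    unfolding sqnorm_lin[of n "- 1" p] using e
    by (simp add: conf_factor_def Q_def divide_inverse algebra_simps)
  ultimately show ?thesis by linarith
qed

lemma rdist_to_ray_le:
  assumes p: "p \<in> Rn n" and e: "e \<in> Rn n" "sqnorm n e = 1" "dotp n p e = 0" and l: "l \<ge> 0"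
  shows "rdist n (conf_metric n) p (\<lambda>i. l * e i) \<le> sqrt (sqnorm n p) + 2 * sqrt l"
proof -
  define c where "c t = (\<lambda>i. (1 - t) * p i + (t\<^sup>2 * l) * e i)" for t
  define D where "D i t = (- 1) * p i + (2 * t * l) * e i" for i t
  have D: "((\<lambda>s. c s i) has_real_derivative D i t) (at t)" for i t
    unfolding c_def D_def by (auto intro!: derivative_eq_intros)
  have c: "adm_curve n c"
    by (rule adm_curveI[OF _ D]) (use p e in \<open>auto simp: Rn_def c_def D_def intro!: continuous_intros\<close>)
  have "curve_length n (conf_metric n) c \<le> sqrt (sqnorm n p) + 2 * sqrt l"
  proof (rule curve_length_le[OF integrable_speed_conf_metric[OF c]])
    fix t :: real assume t: "t \<in> {0..1}"
    have "(\<lambda>i. cvel c i t) = (\<lambda>i. (- 1) * p i + (2 * t * l) * e i)"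
      using cvel_eqI[OF D t] by (simp add: D_def)
    then have "conf_factor n (c t) * sqnorm n (\<lambda>i. cvel c i t) \<le> sqnorm n p + 4 * l"
      unfolding c_def using conf_factor_times_sqnorm_parabola_le[OF e(2,3) l] by simp
    also have "\<dots> \<le> (sqrt (sqnorm n p) + 2 * sqrt l)\<^sup>2"
      using l by (simp add: power2_sum power_mult_distrib)
    finally show "speed n (conf_metric n) c t \<le> sqrt (sqnorm n p) + 2 * sqrt l"
      unfolding speed_conf_metric using l by (simp add: real_sqrt_le_iff real_le_lsqrt)
  qed
  moreover have "c 0 = p" "c 1 = (\<lambda>i. l * e i)" by (auto simp: c_def)
  ultimately show ?thesis
    using rdist_le_curve_length[OF riem_metric_conf_metric c] by fastforce
qed

lemma lipfun_ray_ge: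
  assumes "sqnorm n e = 1" "0 \<le> l"
  shows "2 * sqrt l \<le> lipfun n e (\<lambda>i. l * e i)"
proof -
  have "l \<le> sqrt (1 + l\<^sup>2)" by (simp add: real_le_rsqrt)
  then have "sqrt (4 * l) \<le> lipfun n e (\<lambda>i. l * e i)"
    using assms unfolding lipfun_def
    by (intro real_sqrt_le_mono) (simp add: sqnorm_scale dotp_scale dotp_self)
  then show ?thesis by (simp add: real_sqrt_mult)
qed

lemma lipfun_opposite_ray_le:
  assumes "sqnorm n e = 1" "0 \<le> l"
  shows "lipfun n e (\<lambda>i. - l * e i) \<le> 2"
proof -
  have "sqnorm n (\<lambda>i. - l * e i) = l\<^sup>2" "dotp n (\<lambda>i. - l * e i) e = - l"
    using assms(1) sqnorm_scale[of n "- l" e] dotp_scale[of n "- l" e e] by (simp_all add: dotp_self)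
  moreover have "sqrt (1 + l\<^sup>2) \<le> sqrt ((1 + l)\<^sup>2)"
    using assms(2) by (intro real_sqrt_le_mono) (simp add: power2_sum)
  ultimately have "lipfun n e (\<lambda>i. - l * e i) \<le> sqrt 4"
    using assms(2) unfolding lipfun_def by (intro real_sqrt_le_mono) simp
  then show ?thesis by simp
qed

lemma reflect_ray: "sqnorm n e = 1 \<Longrightarrow> reflect n e (\<lambda>i. l * e i) = (\<lambda>i. - l * e i)"
  by (simp add: reflect_def dotp_scale dotp_self)

lemma lipfun_sq_add_lipfun_opposite_sq:
  assumes "sqnorm n e = 1"
  shows "(lipfun n e x)\<^sup>2 + (lipfun n (\<lambda>i. - e i) x)\<^sup>2 = 4 * bracket n x"
proof -
  have "sqnorm n (\<lambda>i. - e i) = 1" "dotp n x (\<lambda>i. - e i) = - dotp n x e"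
    using assms sqnorm_scale[of n "-1" e] dotp_scale[of n "-1" e x] dotp_commute[of n x]
    by simp_all
  then show ?thesis using assms by (simp add: lipfun_sq)
qed

lemma bracket_le_of_rdist_le:
  assumes "p \<in> Rn n" "z \<in> Rn n" "sqnorm n e = 1" "rdist n (conf_metric n) p z \<le> r"
  shows "4 * bracket n z
      \<le> (lipfun n e p + r)\<^sup>2 + (lipfun n (\<lambda>i. - e i) p + r)\<^sup>2"
proof -
  have e': "sqnorm n (\<lambda>i. - e i) = 1" using assms(3) sqnorm_scale[of n "-1" e] by simp
  have "lipfun n e z \<le> lipfun n e p + r" "lipfun n (\<lambda>i. - e i) z \<le> lipfun n (\<lambda>i. - e i) p + r"
    using lipfun_diff_le_rdist[OF assms(1,2) assms(3)] lipfun_diff_le_rdist[OF assms(1,2) e'] assms(4)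
    by (simp_all add: abs_le_iff)
  then have "(lipfun n e z)\<^sup>2 \<le> (lipfun n e p + r)\<^sup>2"
    "(lipfun n (\<lambda>i. - e i) z)\<^sup>2 \<le> (lipfun n (\<lambda>i. - e i) p + r)\<^sup>2"
    using lipfun_pos[OF assms(3), of z] lipfun_pos[OF e', of z] by (simp_all add: power_mono)
  then show ?thesis
    using lipfun_sq_add_lipfun_opposite_sq[OF assms(3), of z] by linarith
qed

lemma sqnorm_diff_le: "sqnorm n (\<lambda>i. y i - x i) \<le> 2 * sqnorm n x + 2 * sqnorm n y"
proof -
  have "(y i - x i)\<^sup>2 \<le> 2 * (x i)\<^sup>2 + 2 * (y i)\<^sup>2" for i
    using zero_le_power2[of "x i + y i"] by (simp add: power2_eq_square algebra_simps)
  then show ?thesis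
    unfolding sqnorm_def by (simp add: sum_distrib_left sum.distrib[symmetric] sum_mono)
qed

lemma bdd_above_geo_sphere_rdists:
  assumes p: "p \<in> Rn n" and e: "sqnorm n e = 1"
  shows "bdd_above {rdist n (conf_metric n) x y | x y.
      x \<in> geo_sphere n (conf_metric n) p r \<and> y \<in> geo_sphere n (conf_metric n) p r}"
proof -
  define B where "B = ((lipfun n e p + r)\<^sup>2 + (lipfun n (\<lambda>i. - e i) p + r)\<^sup>2) / 4"
  have bound: "z \<in> Rn n \<and> sqnorm n z \<le> B\<^sup>2" if "z \<in> geo_sphere n (conf_metric n) p r" for z
  proof -
    have z: "z \<in> Rn n" "rdist n (conf_metric n) p z = r"
      using that by (auto simp: geo_sphere_def)
    have "bracket n z \<le> B"
      using bracket_le_of_rdist_le[OF p z(1) e, of r] z(2) by (simp add: B_def)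
    then have "(bracket n z)\<^sup>2 \<le> B\<^sup>2" by (intro power_mono) simp_all
    with z(1) show ?thesis by simp
  qed
  show ?thesis
  proof (rule bdd_aboveI[of _ "sqrt (4 * B\<^sup>2)"], clarify)
    fix x y
    assume "x \<in> geo_sphere n (conf_metric n) p r" "y \<in> geo_sphere n (conf_metric n) p r"
    with bound have x: "x \<in> Rn n" "sqnorm n x \<le> B\<^sup>2" and y: "y \<in> Rn n" "sqnorm n y \<le> B\<^sup>2"
      by blast+
    have "rdist n (conf_metric n) x y \<le> sqrt (sqnorm n (\<lambda>i. y i - x i))"
      by (rule rdist_conf_metric_le_euclidean[OF x(1) y(1)])
    also have "\<dots> \<le> sqrt (4 * B\<^sup>2)"
      using sqnorm_diff_le[of n y x] x(2) y(2) by (intro real_sqrt_le_mono) linarith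
    finally show "rdist n (conf_metric n) x y \<le> sqrt (4 * B\<^sup>2)" .
  qed
qed

lemma geo_sphere_rdiam_ge:
  assumes n: "n \<ge> 2" and p: "p \<in> Rn n"
  shows "\<exists>r\<ge>N. r - (sqrt (sqnorm n p) + 2)
      \<le> rdiam n (conf_metric n) (geo_sphere n (conf_metric n) p r)"
proof -
  obtain e where e: "e \<in> Rn n" "sqnorm n e = 1" "dotp n p e = 0"
    using exists_unit_orthogonal[OF n] by blast
  define s where "s = (\<bar>N\<bar> + lipfun n e p) / 2"
  have s: "0 \<le> s" using lipfun_pos[OF e(2), of p] by (simp add: s_def)
  define x where "x = (\<lambda>i. s\<^sup>2 * e i)"
  define y where "y = reflect n e x"
  define r where "r = rdist n (conf_metric n) p x"
  have x: "x \<in> Rn n" and y: "y \<in> Rn n"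
    using e(1) by (auto simp: x_def y_def Rn_def reflect_def)
  have far: "2 * s \<le> lipfun n e x"
    using lipfun_ray_ge[OF e(2), of "s\<^sup>2"] s by (simp add: x_def)
  have near: "lipfun n e y \<le> 2"
    using lipfun_opposite_ray_le[OF e(2), of "s\<^sup>2"] by (simp add: y_def x_def reflect_ray[OF e(2)])
  have r_le: "r \<le> sqrt (sqnorm n p) + 2 * s"
    using rdist_to_ray_le[OF p e, of "s\<^sup>2"] s by (simp add: r_def x_def)
  have r_ge: "lipfun n e x - lipfun n e p \<le> r"
    using lipfun_diff_le_rdist[OF p x e(2)] by (simp add: r_def)
  have "lipfun n e x - lipfun n e y \<le> rdist n (conf_metric n) x y"
    using lipfun_diff_le_rdist[OF x y e(2)] by simp
  also have "rdist n (conf_metric n) x y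
      \<le> rdiam n (conf_metric n) (geo_sphere n (conf_metric n) p r)"
  proof -
    have "rdist n (conf_metric n) p y = r"
      unfolding y_def r_def using e(2,1,3) by (rule rdist_reflect)
    then have "x \<in> geo_sphere n (conf_metric n) p r" "y \<in> geo_sphere n (conf_metric n) p r"
      using x y by (simp_all add: geo_sphere_def r_def)
    then show ?thesis
      unfolding rdiam_def by (intro cSup_upper bdd_above_geo_sphere_rdists[OF p e(2)]) blast
  qed
  finally have "r - (sqrt (sqnorm n p) + 2)
      \<le> rdiam n (conf_metric n) (geo_sphere n (conf_metric n) p r)"
    using far near r_le by linarith
  moreover have "N \<le> r"
  proof -
    have "\<bar>N\<bar> \<le> r" using far r_ge by (simp add: s_def)
    then show ?thesis by linarith
  qed
  ultimately show ?thesis by blast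
qed

lemma Limsup_ratio_ge_1:
  fixes D :: "real \<Rightarrow> real"
  assumes "0 \<le> C" and large: "\<And>N. \<exists>r\<ge>N. r - C \<le> D r"
  shows "1 \<le> Limsup at_top (\<lambda>r. ereal (D r / r))"
  unfolding Limsup_def
proof (rule INF_greatest)
  fix P :: "real \<Rightarrow> bool" assume "P \<in> {P. eventually P at_top}"
  then obtain N where N: "\<And>r. r \<ge> N \<Longrightarrow> P r" by (auto simp: eventually_at_top_linorder)
  show "1 \<le> (SUP r\<in>Collect P. ereal (D r / r))"
  proof (rule ereal_le_epsilon2)
    fix \<epsilon> :: real assume "0 < \<epsilon>"
    obtain r where r: "r \<ge> max N (max 1 (C / \<epsilon>))" and Dr: "r - C \<le> D r"
      using large by blast
    have "1 - \<epsilon> \<le> D r / r"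
    proof -
      have "C \<le> \<epsilon> * r" using r \<open>0 < \<epsilon>\<close> by (simp add: pos_divide_le_eq mult.commute)
      then have "(1 - \<epsilon>) * r \<le> D r" using Dr by (simp add: algebra_simps)
      then show ?thesis using r by (simp add: le_divide_eq)
    qed
    then have "1 \<le> ereal (D r / r) + ereal \<epsilon>" by simp
    also have "\<dots> \<le> (SUP r\<in>Collect P. ereal (D r / r)) + ereal \<epsilon>"
      using N r by (intro add_right_mono SUP_upper) auto
    finally show "1 \<le> (SUP r\<in>Collect P. ereal (D r / r)) + ereal \<epsilon>" .
  qed
qed

theorem corollary2:
  shows "\<exists>N::nat. \<forall>n\<ge>N. \<exists>g. riem_metric n g \<and> complete_metric n g \<and> pos_ricci n g \<and>
     (\<forall>p\<in>Rn n. Limsup at_top (\<lambda>r. ereal (rdiam n g (geo_sphere n g p r) / r)) \<ge> 1)"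
proof (intro exI[of _ 2] allI impI)
  fix n :: nat assume n: "2 \<le> n"
  have "Limsup at_top (\<lambda>r. ereal (rdiam n (conf_metric n) (geo_sphere n (conf_metric n) p r) / r)) \<ge> 1"
    if "p \<in> Rn n" for p
    using geo_sphere_rdiam_ge[OF n that] by (intro Limsup_ratio_ge_1[of "sqrt (sqnorm n p) + 2"]) auto
  then show "\<exists>g. riem_metric n g \<and> complete_metric n g \<and> pos_ricci n g \<and>
     (\<forall>p\<in>Rn n. Limsup at_top (\<lambda>r. ereal (rdiam n g (geo_sphere n g p r) / r)) \<ge> 1)"
    using riem_metric_conf_metric complete_metric_conf_metric pos_ricci_conf_metric[OF n] by blast
qed

end
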